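(* Let $a_{11},a_{12},a_{21},a_{22}\in\mathbb{R}$, $\sigma_x,\sigma_y>0$ be fixed with $a_{22}<0$ and $a_{11}a_{22}-a_{12}a_{21}>0$; set $\tilde a:=a_{11}-a_{12}a_{21}/a_{22}$. For $\epsilon>0$ let $A_\epsilon=\begin{pmatrix} a_{11} & a_{12}\\ a_{21}/\epsilon & a_{22}/\epsilon\end{pmatrix}$, $Q=\begin{pmatrix}\sigma_x^2&0\\0&\sigma_y^2/\epsilon\end{pmatrix}$, and for $\epsilon$ small enough let $\Sigma=(\Sigma_{ij})$ be the unique solution of the Lyapunov equation $A_\epsilon\Sigma+\Sigma A_\epsilon^{\top}=-Q$, and let $\lambda_1,\lambda_2$ be the real eigenvalues $\lambda_{1,2}=\frac12\big(a_{11}+\frac{a_{22}}{\epsilon}\pm\sqrt{\Delta}\big)$ with $\Delta=(a_{11}+a_{22}/\epsilon)^2-4a_{22}\tilde a/\epsilon$. Define $$\hat b:=\lambda_1,\qquad \hat\sigma^2:=-2\lambda_1\,\frac{\Sigma_{11}(\lambda_2-a_{11})-\Sigma_{21}a_{12}}{\lambda_2-\lambda_1}.$$ Then, as $\epsilon\to0^+$, $$\hat b=\tilde a-\frac{a_{12}a_{21}\tilde a}{a_{22}^2}\epsilon+O(\epsilon^2),\qquad \hat\sigma^2=\sigma_x^2-\frac{2\sigma_x^2a_{12}a_{21}-\sigma_y^2a_{12}^2}{a_{22}^2}\,\epsilon+O(\epsilon^2).$$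
   Context: $\Sigma$ is the stationary covariance matrix of the two-dimensional Ornstein–Uhlenbeck process $\dot x=a_{11}x+a_{12}y+\sigma_x\dot W_x$, $\dot y=\frac1\epsilon(a_{21}x+a_{22}y)+\frac{\sigma_y}{\sqrt\epsilon}\dot W_y$ with independent standard Wiener processes $W_x,W_y$. *)

theory Defs
  imports "HOL-Analysis.Analysis" "HOL-Library.Landau_Symbols"
begin

definition A_eps :: "real \<Rightarrow> real \<Rightarrow> real \<Rightarrow> real \<Rightarrow> real \<Rightarrow> real^2^2" where
  "A_eps a11 a12 a21 a22 \<epsilon> =
     vector [vector [a11, a12], vector [a21 / \<epsilon>, a22 / \<epsilon>]]"

definition Q_eps :: "real \<Rightarrow> real \<Rightarrow> real \<Rightarrow> real^2^2" where
  "Q_eps sx sy \<epsilon> = vector [vector [sx^2, 0], vector [0, sy^2 / \<epsilon>]]"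

definition lyap :: "real^2^2 \<Rightarrow> real^2^2 \<Rightarrow> real^2^2 \<Rightarrow> bool" where
  "lyap A Q S \<longleftrightarrow> A ** S + S ** transpose A = - Q"

definition Sigma_eps :: "real \<Rightarrow> real \<Rightarrow> real \<Rightarrow> real \<Rightarrow> real \<Rightarrow> real \<Rightarrow> real \<Rightarrow> real^2^2" where
  "Sigma_eps a11 a12 a21 a22 sx sy \<epsilon> =
     (THE S. lyap (A_eps a11 a12 a21 a22 \<epsilon>) (Q_eps sx sy \<epsilon>) S)"

definition a_tilde :: "real \<Rightarrow> real \<Rightarrow> real \<Rightarrow> real \<Rightarrow> real" where
  "a_tilde a11 a12 a21 a22 = a11 - a12 * a21 / a22"

definition Delta_eps :: "real \<Rightarrow> real \<Rightarrow> real \<Rightarrow> real \<Rightarrow> real \<Rightarrow> real" where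
  "Delta_eps a11 a12 a21 a22 \<epsilon> =
     (a11 + a22 / \<epsilon>)^2 - 4 * a22 * a_tilde a11 a12 a21 a22 / \<epsilon>"

definition lambda1 :: "real \<Rightarrow> real \<Rightarrow> real \<Rightarrow> real \<Rightarrow> real \<Rightarrow> real" where
  "lambda1 a11 a12 a21 a22 \<epsilon> = (a11 + a22 / \<epsilon> + sqrt (Delta_eps a11 a12 a21 a22 \<epsilon>)) / 2"

definition lambda2 :: "real \<Rightarrow> real \<Rightarrow> real \<Rightarrow> real \<Rightarrow> real \<Rightarrow> real" where
  "lambda2 a11 a12 a21 a22 \<epsilon> = (a11 + a22 / \<epsilon> - sqrt (Delta_eps a11 a12 a21 a22 \<epsilon>)) / 2"

definition b_hat :: "real \<Rightarrow> real \<Rightarrow> real \<Rightarrow> real \<Rightarrow> real \<Rightarrow> real" where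
  "b_hat a11 a12 a21 a22 \<epsilon> = lambda1 a11 a12 a21 a22 \<epsilon>"

definition sigma2_hat :: "real \<Rightarrow> real \<Rightarrow> real \<Rightarrow> real \<Rightarrow> real \<Rightarrow> real \<Rightarrow> real \<Rightarrow> real" where
  "sigma2_hat a11 a12 a21 a22 sx sy \<epsilon> =
     (let l1 = lambda1 a11 a12 a21 a22 \<epsilon>; l2 = lambda2 a11 a12 a21 a22 \<epsilon>;
          S = Sigma_eps a11 a12 a21 a22 sx sy \<epsilon>
      in -2 * l1 * ((S$1$1) * (l2 - a11) - (S$2$1) * a12) / (l2 - l1))"

end

(* For small \<epsilon> the eigenvalue \<lambda>\<^sub>1 of A_\<epsilon> is the bounded root of
   \<epsilon> \<lambda>\<^sup>2 - (\<epsilon> a11 + a22) \<lambda> + (a11 a22 - a12 a21) = 0, i.e. a fixed point of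
   \<lambda> = a_tilde + \<epsilon> \<lambda> (\<lambda> - a11) / a22; substituting the fixed point into itself gives the
   expansion of b_hat with remainder \<epsilon>\<^sup>2 times a convergent function.
   Solving the 2x2 Lyapunov equation explicitly and eliminating \<lambda>\<^sub>2 and the determinant
   with the characteristic equation turns sigma2_hat into the quotient
   (a22\<^sup>2 sx\<^sup>2 + \<epsilon> a12\<^sup>2 sy\<^sup>2 - \<epsilon>\<^sup>2 sx\<^sup>2 \<lambda>\<^sub>1\<^sup>2) / (a22\<^sup>2 + 2 \<epsilon> a12 a21 + \<epsilon>\<^sup>2 (a11\<^sup>2 - 2 \<lambda>\<^sub>1\<^sup>2)),
   whose first-order expansion can be read off because the \<epsilon>\<^sup>2 parts stay bounded. *)

theory Submission
  imports Defs
begin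

lemma bigoI_eventually_mult_tendsto:
  fixes f g h :: "'a \<Rightarrow> real"
  assumes "eventually (\<lambda>x. f x = g x * h x) F" and "(h \<longlongrightarrow> c) F"
  shows "f \<in> O[F](g)"
proof -
  have "h \<in> O[F](\<lambda>_. 1)"
    using assms(2) by (intro bigoI_tendsto[where c = c]) simp_all
  then have "(\<lambda>x. g x * h x) \<in> O[F](g)"
    by (intro landau_o.big_1_mult) simp_all
  then show ?thesis
    using landau_o.big.in_cong[OF assms(1)] by simp
qed

lemma second_order_expansion_divide:
  fixes r s :: "real \<Rightarrow> real" and a b c d :: real
  assumes r: "(r \<longlongrightarrow> r0) (at 0 within S)" and s: "(s \<longlongrightarrow> s0) (at 0 within S)"
    and c: "c \<noteq> 0"
  shows "(\<lambda>e. (a + b * e + e\<^sup>2 * r e) / (c + d * e + e\<^sup>2 * s e)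
             - (a / c + (b * c - a * d) / c\<^sup>2 * e)) \<in> O[at 0 within S](\<lambda>e. e\<^sup>2)"
proof (rule bigoI_eventually_mult_tendsto)
  define q0 where "q0 = a / c"
  define q1 where "q1 = (b * c - a * d) / c\<^sup>2"
  define M where "M e = c + d * e + e\<^sup>2 * s e" for e
  have "(M \<longlongrightarrow> c + d * 0 + 0\<^sup>2 * s0) (at 0 within S)"
    unfolding M_def by (intro tendsto_intros s)
  then have M_lim: "(M \<longlongrightarrow> c) (at 0 within S)" by simp
  then have "eventually (\<lambda>e. M e \<noteq> 0) (at 0 within S)"
    using c by (rule tendsto_imp_eventually_ne)
  then show "eventually (\<lambda>e. (a + b * e + e\<^sup>2 * r e) / M e - (q0 + q1 * e)
                = e\<^sup>2 * ((r e - q0 * s e - q1 * (d + e * s e)) / M e)) (at 0 within S)"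
  proof eventually_elim
    case (elim e)
    have "a + b * e + e\<^sup>2 * r e - (q0 + q1 * e) * M e = e\<^sup>2 * (r e - q0 * s e - q1 * (d + e * s e))"
      using c by (simp add: M_def q0_def q1_def field_simps power2_eq_square)
    with elim show ?case by (simp add: field_simps)
  qed
  show "((\<lambda>e. (r e - q0 * s e - q1 * (d + e * s e)) / M e)
          \<longlongrightarrow> (r0 - q0 * s0 - q1 * (d + 0 * s0)) / c) (at 0 within S)"
    by (intro tendsto_intros r s M_lim c)
qed

lemma lyap_2x2_iff:
  fixes a b c d q1 q2 :: real
  shows "lyap (vector [vector [a, b], vector [c, d]]) (vector [vector [q1, 0], vector [0, q2]]) S \<longleftrightarrow>
    2 * a * S$1$1 + b * (S$1$2 + S$2$1) = - q1 \<and> a * S$1$2 + b * S$2$2 + c * S$1$1 + d * S$1$2 = 0 \<and>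
    c * S$1$1 + d * S$2$1 + a * S$2$1 + b * S$2$2 = 0 \<and> c * (S$1$2 + S$2$1) + 2 * d * S$2$2 = - q2"
  unfolding lyap_def vec_eq_iff forall_2 matrix_matrix_mult_def transpose_def sum_2
  by (simp add: algebra_simps)

lemma lyap_2x2_unique_solution:
  fixes a b c d q1 q2 :: real
  assumes trace: "a + d \<noteq> 0" and det: "a * d - b * c \<noteq> 0"
  defines "k \<equiv> 2 * (a + d) * (a * d - b * c)"
  shows "lyap (vector [vector [a, b], vector [c, d]]) (vector [vector [q1, 0], vector [0, q2]]) S \<longleftrightarrow>
    S = vector [vector [- ((a * d - b * c + d\<^sup>2) * q1 + b\<^sup>2 * q2) / k, (d * c * q1 + a * b * q2) / k],
                vector [(d * c * q1 + a * b * q2) / k, - ((a * d - b * c + a\<^sup>2) * q2 + c\<^sup>2 * q1) / k]]"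
    (is "?lyap \<longleftrightarrow> S = ?S")
proof -
  have k: "k \<noteq> 0" using trace det by (simp add: k_def)
  show ?thesis
  proof
    assume ?lyap
    then have eqs: "2 * a * S$1$1 + b * (S$1$2 + S$2$1) = - q1"
      "a * S$1$2 + b * S$2$2 + c * S$1$1 + d * S$1$2 = 0"
      "c * S$1$1 + d * S$2$1 + a * S$2$1 + b * S$2$2 = 0"
      "c * (S$1$2 + S$2$1) + 2 * d * S$2$2 = - q2"
      by (simp_all add: lyap_2x2_iff)
    have "(a + d) * (S$1$2 - S$2$1) = 0" using eqs(2,3) by (simp add: algebra_simps)
    then have sym: "S$2$1 = S$1$2" using trace by simp
    have "k * S$1$1 = - ((a * d - b * c + d\<^sup>2) * q1 + b\<^sup>2 * q2)"
      "k * S$1$2 = d * c * q1 + a * b * q2"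
      "k * S$2$2 = - ((a * d - b * c + a\<^sup>2) * q2 + c\<^sup>2 * q1)"
      using eqs sym unfolding k_def by algebra+
    with sym k show "S = ?S"
      unfolding vec_eq_iff forall_2 by (simp add: field_simps)
  next
    assume S: "S = ?S"
    show ?lyap
      unfolding S lyap_2x2_iff vector_2 using k
      by (simp add: field_simps) (simp add: k_def, intro conjI; algebra)
  qed
qed

lemma eventually_fast_slow_regime:
  fixes a11 a22 D :: real
  assumes "a22 < 0"
  shows "eventually (\<lambda>e. 0 < e \<and> e * a11 + a22 < 0 \<and> 4 * e * D < (e * a11 + a22)\<^sup>2) (at_right 0)"
proof -
  have "((\<lambda>e. e * a11 + a22) \<longlongrightarrow> 0 * a11 + a22) (at_right 0)"
    by (intro tendsto_intros)
  then have "eventually (\<lambda>e. e * a11 + a22 < 0) (at_right 0)"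
    using assms by (intro order_tendstoD(2)) simp_all
  moreover have "((\<lambda>e. (e * a11 + a22)\<^sup>2 - 4 * e * D) \<longlongrightarrow> (0 * a11 + a22)\<^sup>2 - 4 * 0 * D) (at_right 0)"
    by (intro tendsto_intros)
  then have "eventually (\<lambda>e. 0 < (e * a11 + a22)\<^sup>2 - 4 * e * D) (at_right 0)"
    using assms by (intro order_tendstoD(1)) auto
  ultimately show ?thesis
    using eventually_at_right_less[of 0] by eventually_elim simp
qed

lemma eps_lambda1_eq:
  fixes a11 a12 a21 a22 e :: real
  assumes "e > 0" and "a22 \<noteq> 0"
  shows "e * lambda1 a11 a12 a21 a22 e
           = (e * a11 + a22 + sqrt ((e * a11 + a22)\<^sup>2 - 4 * e * (a11 * a22 - a12 * a21))) / 2"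
proof -
  define dsc where "dsc = (e * a11 + a22)\<^sup>2 - 4 * e * (a11 * a22 - a12 * a21)"
  have "Delta_eps a11 a12 a21 a22 e = dsc / e\<^sup>2"
    using assms unfolding Delta_eps_def a_tilde_def dsc_def by (simp add: field_simps power2_eq_square)
  then have "sqrt (Delta_eps a11 a12 a21 a22 e) = sqrt dsc / e"
    using assms(1) by (simp add: real_sqrt_divide)
  with assms(1) show ?thesis
    unfolding lambda1_def dsc_def[symmetric] by (simp add: field_simps)
qed

lemma lambda1_characteristic_eq:
  fixes a11 a12 a21 a22 e :: real
  assumes "e > 0" and "a22 \<noteq> 0" and "4 * e * (a11 * a22 - a12 * a21) \<le> (e * a11 + a22)\<^sup>2"
  shows "e * (lambda1 a11 a12 a21 a22 e)\<^sup>2 - (e * a11 + a22) * lambda1 a11 a12 a21 a22 e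
           + (a11 * a22 - a12 * a21) = 0"
proof -
  define s where "s = sqrt ((e * a11 + a22)\<^sup>2 - 4 * e * (a11 * a22 - a12 * a21))"
  have s2: "s\<^sup>2 = (e * a11 + a22)\<^sup>2 - 4 * e * (a11 * a22 - a12 * a21)"
    using assms(3) by (simp add: s_def)
  have "2 * (e * lambda1 a11 a12 a21 a22 e) = e * a11 + a22 + s"
    using eps_lambda1_eq[OF assms(1,2), of a11 a12 a21] unfolding s_def by simp
  with s2 have "e * (e * (lambda1 a11 a12 a21 a22 e)\<^sup>2 - (e * a11 + a22) * lambda1 a11 a12 a21 a22 e
           + (a11 * a22 - a12 * a21)) = 0"
    by algebra
  with assms(1) show ?thesis by simp
qed

lemma Sigma_eps_entries:
  fixes a11 a12 a21 a22 sx sy e :: real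
  assumes e: "e > 0" and u: "e * a11 + a22 \<noteq> 0" and D: "a11 * a22 - a12 * a21 \<noteq> 0"
  shows "\<exists>!S. lyap (A_eps a11 a12 a21 a22 e) (Q_eps sx sy e) S"
    and "Sigma_eps a11 a12 a21 a22 sx sy e $1$1
           = - ((e * (a11 * a22 - a12 * a21) + a22\<^sup>2) * sx\<^sup>2 + e * a12\<^sup>2 * sy\<^sup>2)
               / (2 * (e * a11 + a22) * (a11 * a22 - a12 * a21))"
    and "Sigma_eps a11 a12 a21 a22 sx sy e $2$1
           = (a22 * a21 * sx\<^sup>2 + e * a11 * a12 * sy\<^sup>2)
               / (2 * (e * a11 + a22) * (a11 * a22 - a12 * a21))"
proof -
  have trace: "a11 + a22 / e \<noteq> 0" using e u by (simp add: field_simps)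
  have det: "a11 * (a22 / e) - a12 * (a21 / e) \<noteq> 0" using e D by (simp add: field_simps)
  have "A_eps a11 a12 a21 a22 e = vector [vector [a11, a12], vector [a21 / e, a22 / e]]"
    "Q_eps sx sy e = vector [vector [sx\<^sup>2, 0], vector [0, sy\<^sup>2 / e]]"
    unfolding A_eps_def Q_eps_def by simp_all
  note solution = lyap_2x2_unique_solution[OF trace det, of "sx\<^sup>2" "sy\<^sup>2 / e", folded this]
  show ex1: "\<exists>!S. lyap (A_eps a11 a12 a21 a22 e) (Q_eps sx sy e) S"
    unfolding solution by simp
  have "lyap (A_eps a11 a12 a21 a22 e) (Q_eps sx sy e) (Sigma_eps a11 a12 a21 a22 sx sy e)"
    unfolding Sigma_eps_def by (rule theI'[OF ex1])
  note Sigma = this[unfolded solution vector_2]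
  define U where "U = e * a11 + a22"
  define \<Delta> where "\<Delta> = a11 * a22 - a12 * a21"
  have "U \<noteq> 0" "\<Delta> \<noteq> 0" using u D by (simp_all add: U_def \<Delta>_def)
  have den: "2 * (a11 + a22 / e) * (a11 * (a22 / e) - a12 * (a21 / e)) = 2 * U * \<Delta> / e\<^sup>2"
    using e by (simp add: field_simps power2_eq_square U_def \<Delta>_def)
  show "Sigma_eps a11 a12 a21 a22 sx sy e $1$1
           = - ((e * (a11 * a22 - a12 * a21) + a22\<^sup>2) * sx\<^sup>2 + e * a12\<^sup>2 * sy\<^sup>2)
               / (2 * (e * a11 + a22) * (a11 * a22 - a12 * a21))"
    unfolding Sigma den U_def[symmetric] \<Delta>_def[symmetric] using e \<open>U \<noteq> 0\<close> \<open>\<Delta> \<noteq> 0\<close>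
    by (simp add: field_simps) (simp add: \<Delta>_def; algebra)
  show "Sigma_eps a11 a12 a21 a22 sx sy e $2$1
           = (a22 * a21 * sx\<^sup>2 + e * a11 * a12 * sy\<^sup>2)
               / (2 * (e * a11 + a22) * (a11 * a22 - a12 * a21))"
    unfolding Sigma den U_def[symmetric] \<Delta>_def[symmetric] using e \<open>U \<noteq> 0\<close> \<open>\<Delta> \<noteq> 0\<close>
    by (simp add: field_simps) (simp add: \<Delta>_def; algebra)
qed

lemma sigma2_hat_closed_form:
  fixes a11 a12 a21 a22 sx sy e :: real
  assumes e: "e > 0" and a22: "a22 \<noteq> 0" and u: "e * a11 + a22 \<noteq> 0"
    and D: "a11 * a22 - a12 * a21 \<noteq> 0"
    and dsc: "4 * e * (a11 * a22 - a12 * a21) < (e * a11 + a22)\<^sup>2"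
  shows "sigma2_hat a11 a12 a21 a22 sx sy e
           = (a22\<^sup>2 * sx\<^sup>2 + a12\<^sup>2 * sy\<^sup>2 * e + e\<^sup>2 * (- sx\<^sup>2 * (lambda1 a11 a12 a21 a22 e)\<^sup>2))
             / (a22\<^sup>2 + 2 * a12 * a21 * e + e\<^sup>2 * (a11\<^sup>2 - 2 * (lambda1 a11 a12 a21 a22 e)\<^sup>2))"
proof -
  define x where "x = lambda1 a11 a12 a21 a22 e"
  define U where "U = e * a11 + a22"
  define \<Delta> where "\<Delta> = a11 * a22 - a12 * a21"
  define G where "G = U - 2 * e * x"
  have char: "e * x\<^sup>2 - U * x + \<Delta> = 0"
    using lambda1_characteristic_eq[OF e a22] dsc by (simp add: x_def U_def \<Delta>_def)
  have "G = - sqrt ((e * a11 + a22)\<^sup>2 - 4 * e * (a11 * a22 - a12 * a21))"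
    using eps_lambda1_eq[OF e a22, of a11 a12 a21] by (simp add: G_def U_def x_def)
  then have "G \<noteq> 0" using dsc by simp
  have "U \<noteq> 0" "\<Delta> \<noteq> 0" using u D by (simp_all add: U_def \<Delta>_def)
  have gap: "lambda2 a11 a12 a21 a22 e - x = G / e"
    and shift: "lambda2 a11 a12 a21 a22 e - a11 = (a22 - e * x) / e"
    using e unfolding G_def U_def x_def lambda1_def lambda2_def by (simp_all add: field_simps)
  have "sigma2_hat a11 a12 a21 a22 sx sy e
      = - x * ((- (e * \<Delta> + a22\<^sup>2) * sx\<^sup>2 - e * a12\<^sup>2 * sy\<^sup>2) * (a22 - e * x)
               - e * a12 * (a22 * a21 * sx\<^sup>2 + e * a11 * a12 * sy\<^sup>2)) / (U * \<Delta> * G)"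
    unfolding sigma2_hat_def Let_def x_def[symmetric] gap shift
      Sigma_eps_entries(2,3)[OF e u D] U_def[symmetric] \<Delta>_def[symmetric]
    using e \<open>G \<noteq> 0\<close> \<open>U \<noteq> 0\<close> \<open>\<Delta> \<noteq> 0\<close> by (simp add: field_simps)
  also have "\<dots> = (a22\<^sup>2 * sx\<^sup>2 + a12\<^sup>2 * sy\<^sup>2 * e + e\<^sup>2 * (- sx\<^sup>2 * x\<^sup>2)) / (U * G)"
  proof -
    have "- x * ((- (e * \<Delta> + a22\<^sup>2) * sx\<^sup>2 - e * a12\<^sup>2 * sy\<^sup>2) * (a22 - e * x)
               - e * a12 * (a22 * a21 * sx\<^sup>2 + e * a11 * a12 * sy\<^sup>2))
          = \<Delta> * (a22\<^sup>2 * sx\<^sup>2 + a12\<^sup>2 * sy\<^sup>2 * e + e\<^sup>2 * (- sx\<^sup>2 * x\<^sup>2))"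
      using char unfolding U_def \<Delta>_def by algebra
    then show ?thesis using \<open>\<Delta> \<noteq> 0\<close> by simp
  qed
  also have "U * G = a22\<^sup>2 + 2 * a12 * a21 * e + e\<^sup>2 * (a11\<^sup>2 - 2 * x\<^sup>2)"
    using char unfolding G_def U_def \<Delta>_def by algebra
  finally show ?thesis unfolding x_def .
qed

lemma eps_lambda1_tendsto_0:
  fixes a11 a12 a21 a22 :: real
  assumes a22: "a22 < 0"
  shows "((\<lambda>e. e * lambda1 a11 a12 a21 a22 e) \<longlongrightarrow> 0) (at_right 0)"
proof -
  let ?D = "a11 * a22 - a12 * a21"
  have "((\<lambda>e. (e * a11 + a22 + sqrt ((e * a11 + a22)\<^sup>2 - 4 * e * ?D)) / 2)
          \<longlongrightarrow> (0 * a11 + a22 + sqrt ((0 * a11 + a22)\<^sup>2 - 4 * 0 * ?D)) / 2) (at_right 0)"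
    by (intro tendsto_intros) simp
  moreover have "(0 * a11 + a22 + sqrt ((0 * a11 + a22)\<^sup>2 - 4 * 0 * ?D)) / 2 = 0"
    using a22 by simp
  moreover have "eventually (\<lambda>e. (e * a11 + a22 + sqrt ((e * a11 + a22)\<^sup>2 - 4 * e * ?D)) / 2
                                = e * lambda1 a11 a12 a21 a22 e) (at_right 0)"
    using eventually_at_right_less[of 0]
    by eventually_elim (use a22 in \<open>simp add: eps_lambda1_eq less_imp_neq\<close>)
  ultimately show ?thesis
    by (auto elim: Lim_transform_eventually)
qed

lemma lambda1_tendsto_a_tilde:
  fixes a11 a12 a21 a22 :: real
  assumes a22: "a22 < 0"
  shows "(lambda1 a11 a12 a21 a22 \<longlongrightarrow> a_tilde a11 a12 a21 a22) (at_right 0)"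
proof -
  let ?x = "lambda1 a11 a12 a21 a22" and ?D = "a11 * a22 - a12 * a21"
  let ?y = "\<lambda>e. e * ?x e"
  have y: "(?y \<longlongrightarrow> 0) (at_right 0)" by (rule eps_lambda1_tendsto_0[OF a22])
  have "((\<lambda>e. (?D - a11 * ?y e) / (a22 - ?y e)) \<longlongrightarrow> (?D - a11 * 0) / (a22 - 0)) (at_right 0)"
    using a22 by (intro tendsto_intros y) simp
  moreover have "(?D - a11 * 0) / (a22 - 0) = a_tilde a11 a12 a21 a22"
    using a22 unfolding a_tilde_def by (simp add: field_simps)
  moreover have "eventually (\<lambda>e. a22 - ?y e \<noteq> 0) (at_right 0)"
    using y a22 by (intro tendsto_imp_eventually_ne[where c = "a22 - 0"] tendsto_intros) simp_all
  then have "eventually (\<lambda>e. (?D - a11 * ?y e) / (a22 - ?y e) = ?x e) (at_right 0)"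
    using eventually_fast_slow_regime[OF a22, of a11 ?D]
  proof eventually_elim
    case (elim e)
    then have "e * (?x e)\<^sup>2 - (e * a11 + a22) * ?x e + ?D = 0"
      using a22 by (intro lambda1_characteristic_eq) auto
    then have "?x e * (a22 - ?y e) = ?D - a11 * ?y e"
      by algebra
    with elim show ?case by (simp add: field_simps)
  qed
  ultimately show ?thesis
    by (auto elim: Lim_transform_eventually)
qed

lemma b_hat_expansion:
  fixes a11 a12 a21 a22 :: real
  assumes a22: "a22 < 0"
  shows "(\<lambda>e. b_hat a11 a12 a21 a22 e
              - (a_tilde a11 a12 a21 a22 - a12 * a21 * a_tilde a11 a12 a21 a22 / a22\<^sup>2 * e))
           \<in> O[at_right 0](\<lambda>e. e\<^sup>2)"
proof (rule bigoI_eventually_mult_tendsto)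
  let ?x = "lambda1 a11 a12 a21 a22" and ?t = "a_tilde a11 a12 a21 a22"
  have t: "a22 * ?t = a11 * a22 - a12 * a21"
    using a22 unfolding a_tilde_def by (simp add: field_simps)
  show "((\<lambda>e. ?x e * (?x e - a11) * (?x e + ?t - a11) / a22\<^sup>2)
          \<longlongrightarrow> ?t * (?t - a11) * (?t + ?t - a11) / a22\<^sup>2) (at_right 0)"
    using a22 by (intro tendsto_intros lambda1_tendsto_a_tilde[OF a22]) simp
  show "eventually (\<lambda>e. b_hat a11 a12 a21 a22 e - (?t - a12 * a21 * ?t / a22\<^sup>2 * e)
          = e\<^sup>2 * (?x e * (?x e - a11) * (?x e + ?t - a11) / a22\<^sup>2)) (at_right 0)"
    using eventually_fast_slow_regime[OF a22, of a11 "a11 * a22 - a12 * a21"]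
  proof eventually_elim
    case (elim e)
    then have "e * (?x e)\<^sup>2 - (e * a11 + a22) * ?x e + (a11 * a22 - a12 * a21) = 0"
      using a22 by (intro lambda1_characteristic_eq) auto
    then have "a22\<^sup>2 * (?x e - ?t) + e * a12 * a21 * ?t = e\<^sup>2 * (?x e * (?x e - a11) * (?x e + ?t - a11))"
      using t by algebra
    with a22 show ?case
      unfolding b_hat_def by (simp add: field_simps)
  qed
qed

lemma sigma2_hat_expansion:
  fixes a11 a12 a21 a22 sx sy :: real
  assumes a22: "a22 < 0" and D: "a11 * a22 - a12 * a21 \<noteq> 0"
  shows "(\<lambda>e. sigma2_hat a11 a12 a21 a22 sx sy e
              - (sx\<^sup>2 - (2 * sx\<^sup>2 * a12 * a21 - sy\<^sup>2 * a12\<^sup>2) / a22\<^sup>2 * e))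
           \<in> O[at_right 0](\<lambda>e. e\<^sup>2)"
proof -
  let ?x = "lambda1 a11 a12 a21 a22"
  let ?quotient = "\<lambda>e. (a22\<^sup>2 * sx\<^sup>2 + a12\<^sup>2 * sy\<^sup>2 * e + e\<^sup>2 * (- sx\<^sup>2 * (?x e)\<^sup>2))
                        / (a22\<^sup>2 + 2 * a12 * a21 * e + e\<^sup>2 * (a11\<^sup>2 - 2 * (?x e)\<^sup>2))"
  let ?linear = "\<lambda>e. sx\<^sup>2 - (2 * sx\<^sup>2 * a12 * a21 - sy\<^sup>2 * a12\<^sup>2) / a22\<^sup>2 * e"
  have "(?x \<longlongrightarrow> a_tilde a11 a12 a21 a22) (at_right 0)"
    by (rule lambda1_tendsto_a_tilde[OF a22])
  then have r: "((\<lambda>e. - sx\<^sup>2 * (?x e)\<^sup>2) \<longlongrightarrow> - sx\<^sup>2 * (a_tilde a11 a12 a21 a22)\<^sup>2) (at_right 0)"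
    and s: "((\<lambda>e. a11\<^sup>2 - 2 * (?x e)\<^sup>2) \<longlongrightarrow> a11\<^sup>2 - 2 * (a_tilde a11 a12 a21 a22)\<^sup>2) (at_right 0)"
    by (auto intro!: tendsto_intros)
  have coefficients: "a22\<^sup>2 * sx\<^sup>2 / a22\<^sup>2
              + (a12\<^sup>2 * sy\<^sup>2 * a22\<^sup>2 - a22\<^sup>2 * sx\<^sup>2 * (2 * a12 * a21)) / (a22\<^sup>2)\<^sup>2 * e = ?linear e" for e
    using a22 by (simp add: field_simps power2_eq_square)
  have expansion: "(\<lambda>e. ?quotient e - ?linear e) \<in> O[at_right 0](\<lambda>e. e\<^sup>2)"
    using a22 second_order_expansion_divide[OF r s, where a = "a22\<^sup>2 * sx\<^sup>2"
        and b = "a12\<^sup>2 * sy\<^sup>2" and c = "a22\<^sup>2" and d = "2 * a12 * a21"]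
    unfolding coefficients by simp
  have "eventually (\<lambda>e. sigma2_hat a11 a12 a21 a22 sx sy e = ?quotient e) (at_right 0)"
    using eventually_fast_slow_regime[OF a22, of a11 "a11 * a22 - a12 * a21"]
    by eventually_elim (rule sigma2_hat_closed_form; use a22 D in auto)
  then have "eventually (\<lambda>e. ?quotient e - ?linear e
               = sigma2_hat a11 a12 a21 a22 sx sy e - ?linear e) (at_right 0)"
    by eventually_elim simp
  from landau_o.big.in_cong[OF this] expansion show ?thesis by simp
qed

lemma eventually_ex1_lyap_A_eps:
  fixes a11 a12 a21 a22 sx sy :: real
  assumes "a22 < 0" and "a11 * a22 - a12 * a21 \<noteq> 0"
  shows "\<forall>\<^sub>F e in at_right 0. \<exists>!S. lyap (A_eps a11 a12 a21 a22 e) (Q_eps sx sy e) S"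
  using eventually_fast_slow_regime[OF assms(1), of a11 "a11 * a22 - a12 * a21"]
  by eventually_elim (use assms(2) in \<open>simp add: Sigma_eps_entries(1)\<close>)

theorem mainTheorem2:
  fixes a11 a12 a21 a22 sx sy :: real
  assumes "sx > 0" and "sy > 0" and "a22 < 0" and "a11 * a22 - a12 * a21 > 0"
  shows "(\<forall>\<^sub>F \<epsilon> in at_right 0.
            \<exists>!S. lyap (A_eps a11 a12 a21 a22 \<epsilon>) (Q_eps sx sy \<epsilon>) S)
       \<and> (\<lambda>\<epsilon>. b_hat a11 a12 a21 a22 \<epsilon>
              - (a_tilde a11 a12 a21 a22
                 - a12 * a21 * a_tilde a11 a12 a21 a22 / a22^2 * \<epsilon>))
           \<in> O[at_right 0](\<lambda>\<epsilon>. \<epsilon>^2)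
       \<and> (\<lambda>\<epsilon>. sigma2_hat a11 a12 a21 a22 sx sy \<epsilon>
              - (sx^2 - (2 * sx^2 * a12 * a21 - sy^2 * a12^2) / a22^2 * \<epsilon>))
           \<in> O[at_right 0](\<lambda>\<epsilon>. \<epsilon>^2)"
  using assms(3,4) eventually_ex1_lyap_A_eps b_hat_expansion sigma2_hat_expansion by auto

end
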